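(* Let $0\le\alpha\le1$ and let $f,g$ be infinitely differentiable functions (on a domain containing $[0,\infty)$ and the range of $g$ respectively) with $f(g(0))=0$, such that all series below converge absolutely and may be rearranged. For real $\beta$ define $$D_x^{\beta}[h](x)=\sum_{k=0}^{\infty}\frac{\sin[\pi(\beta-k)]}{\pi(\beta-k)}\,\frac{\Gamma(\beta+1)}{\Gamma(k+1)}\,x^{k-\beta}\,\frac{d^k}{dx^k}\big[h(x)-h(0)\big],\qquad x>0,$$ with $\frac{\sin[\pi(\beta-k)]}{\pi(\beta-k)}:=1$ when $\beta=k$. For each integer $m\ge0$ define the differential operator (normal-ordered hypergeometric function) $$:{}_2F_2:\left[\begin{matrix}1,\ m-\alpha\\ 1+m,\ 1+m-\alpha\end{matrix};-x\frac{d}{dx}\right]:=\sum_{k=0}^{\infty}\frac{(1)_k\,(m-\alpha)_k}{(1+m)_k\,(1+m-\alpha)_k\,k!}\,(-1)^k\,x^k\frac{d^k}{dx^k},$$ where $(a)_k$ is the Pochhammer symbol, and the weight $$W_m(\alpha,x,g(x))=\sum_{j=0}^{m}\frac{(-1)^j}{m!}\binom{m}{j}\,g(x)^j\;:{}_2F_2:\left[\begin{matrix}1,\ m-\alpha\\ 1+m,\ 1+m-\alpha\end{matrix};-x\frac{d}{dx}\right]\frac{d^m}{dx^m}\big(g(x)^{m-j}\big),$$ where the operator acts only on $\frac{d^m}{dx^m}(g(x)^{m-j})$. Then for $x>0$, $$D_x^{\alpha}[f(g(x))]=\sum_{m=0}^{\infty}W_m(\alpha,x,g(x))\,\frac{\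sin[\pi(\alpha-m)]}{\pi(\alpha-m)}\,\frac{\Gamma(\alpha+1)}{\Gamma(m+1)}\,x^{m-\alpha}\,f^{(m)}(g(x)).$$
   Context: For $0\le\alpha\le1$ the series operator $D_x^\alpha$ is the expansion the paper uses for the Caputo fractional derivative ${}^C D_x^\alpha f(x)=\frac{1}{\Gamma(1-\alpha)}\int_0^x (x-t)^{-\alpha} f'(t)\,dt$, $x>0$. The paper adopts the convention of replacing every function $h$ by $h(x)-h(0)$, i.e. functions being differentiated are taken to vanish at the origin. *)

theory Defs
  imports "HOL-Analysis.Analysis"
begin

definition smooth_on :: "real set \<Rightarrow> (real \<Rightarrow> real) \<Rightarrow> bool" where
  "smooth_on S h \<longleftrightarrow>
     (\<forall>k. \<forall>y\<in>S. ((deriv ^^ k) h has_real_derivative (deriv ^^ Suc k) h y) (at y))"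

definition sinc_ratio :: "real \<Rightarrow> nat \<Rightarrow> real" where
  "sinc_ratio \<beta> k = (if \<beta> = real k then 1
                      else sin (pi * (\<beta> - real k)) / (pi * (\<beta> - real k)))"

definition frac_coeff :: "real \<Rightarrow> nat \<Rightarrow> real" where
  "frac_coeff \<beta> k = sinc_ratio \<beta> k * Gamma (\<beta> + 1) / Gamma (real k + 1)"

definition frac_D_term :: "real \<Rightarrow> (real \<Rightarrow> real) \<Rightarrow> real \<Rightarrow> nat \<Rightarrow> real" where
  "frac_D_term \<beta> h x k =
     frac_coeff \<beta> k * x powr (real k - \<beta>) * (deriv ^^ k) (\<lambda>t. h t - h 0) x"

definition frac_D :: "real \<Rightarrow> (real \<Rightarrow> real) \<Rightarrow> real \<Rightarrow> real" where
  "frac_D \<beta> h x = (\<Sum>k. frac_D_term \<beta> h x k)"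

definition F22_coeff :: "real \<Rightarrow> nat \<Rightarrow> nat \<Rightarrow> real" where
  "F22_coeff \<alpha> m n =
     pochhammer 1 n * pochhammer (real m - \<alpha>) n /
       (pochhammer (1 + real m) n * pochhammer (1 + real m - \<alpha>) n * fact n) * (-1) ^ n"

definition F22_term :: "real \<Rightarrow> nat \<Rightarrow> (real \<Rightarrow> real) \<Rightarrow> real \<Rightarrow> nat \<Rightarrow> real" where
  "F22_term \<alpha> m u x n = F22_coeff \<alpha> m n * x ^ n * (deriv ^^ n) u x"

definition F22_op :: "real \<Rightarrow> nat \<Rightarrow> (real \<Rightarrow> real) \<Rightarrow> real \<Rightarrow> real" where
  "F22_op \<alpha> m u x = (\<Sum>n. F22_term \<alpha> m u x n)"

definition W_weight :: "real \<Rightarrow> nat \<Rightarrow> (real \<Rightarrow> real) \<Rightarrow> real \<Rightarrow> real" where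
  "W_weight \<alpha> m g x =
     (\<Sum>j=0..m. (-1) ^ j / fact m * real (m choose j) * g x ^ j *
        F22_op \<alpha> m ((deriv ^^ m) (\<lambda>t. g t ^ (m - j))) x)"

definition RHS_term :: "real \<Rightarrow> (real \<Rightarrow> real) \<Rightarrow> (real \<Rightarrow> real) \<Rightarrow> real \<Rightarrow> nat \<Rightarrow> real" where
  "RHS_term \<alpha> f g x m =
     W_weight \<alpha> m g x * frac_coeff \<alpha> m * x powr (real m - \<alpha>) * (deriv ^^ m) f (g x)"

text \<open>Term of the fully expanded triple series (indices m, j \<le> m, n), used to express
  that the series may be rearranged.\<close>
definition triple_term :: "real \<Rightarrow> (real \<Rightarrow> real) \<Rightarrow> (real \<Rightarrow> real) \<Rightarrow> real \<Rightarrow> nat \<Rightarrow> nat \<Rightarrow> nat \<Rightarrow> real" where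
  "triple_term \<alpha> f g x m j n =
     (-1) ^ j / fact m * real (m choose j) * g x ^ j *
       F22_term \<alpha> m ((deriv ^^ m) (\<lambda>t. g t ^ (m - j))) x n *
       frac_coeff \<alpha> m * x powr (real m - \<alpha>) * (deriv ^^ m) f (g x)"

end

theory Submission
  imports Defs
begin

text \<open>
  Let \<open>P m k x\<close> (\<open>centred_power_deriv g m k x\<close>) be the \<open>k\<close>-th derivative of
  \<open>t \<mapsto> (g t - g x) ^ m\<close> at \<open>t = x\<close>, expanded binomially. Faa di Bruno's formula holds in the form
  \<open>(f \<circ> g)\<^sup>(\<^sup>k\<^sup>) x = (\<Sum>m\<le>k. f\<^sup>(\<^sup>m\<^sup>) (g x) / m! * P m k x)\<close>,
  because \<open>P m k\<close> vanishes for \<open>k < m\<close> and \<open>(P m k)' = P m (k + 1) - m g' P (m - 1) k\<close>.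
  Since \<open>sin (\<pi> (\<alpha> - k)) = (-1) ^ k sin (\<pi> \<alpha>)\<close>, the coefficient \<open>c k\<close> of \<open>D\<^sup>\<alpha>\<close> and the
  coefficient \<open>a m n\<close> of the \<open>\<^sub>2F\<^sub>2\<close> operator satisfy \<open>c m * a m n = c (m + n)\<close>, so the term
  \<open>(m, j, n)\<close> of the fully expanded right-hand side is a piece of the \<open>(m + n)\<close>-th term of
  \<open>D\<^sup>\<alpha>[f \<circ> g]\<close>. Summing the absolutely summable triple series first over \<open>m + n = k\<close>
  gives the left-hand side; summing it first over \<open>m\<close> fixed gives the right-hand side.
\<close>

lemma iter_deriv_eq_derivative_family:
  assumes "open U" and "\<And>y. y \<in> U \<Longrightarrow> h y = H 0 y"
    and H: "\<And>k y. y \<in> U \<Longrightarrow> (H k has_real_derivative H (Suc k) y) (at y)"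
    and "y \<in> U"
  shows "(deriv ^^ k) h y = H k y"
  using \<open>y \<in> U\<close>
proof (induction k arbitrary: y)
  case 0
  then show ?case using assms(2) by simp
next
  case (Suc k y)
  have "((deriv ^^ k) h has_real_derivative H (Suc k) y) (at y)"
    by (rule has_field_derivative_transform_within_open[OF H[OF Suc.prems] \<open>open U\<close> Suc.prems])
       (simp add: Suc.IH)
  then show ?case by (simp add: DERIV_imp_deriv)
qed

lemma smooth_onI_derivative_family:
  assumes "open U" and "\<And>y. y \<in> U \<Longrightarrow> h y = H 0 y"
    and H: "\<And>k y. y \<in> U \<Longrightarrow> (H k has_real_derivative H (Suc k) y) (at y)"
  shows "smooth_on U h"
  unfolding smooth_on_def
proof (intro allI ballI)
  fix k y assume y: "y \<in> U"
  have eq: "\<And>k y. y \<in> U \<Longrightarrow> (deriv ^^ k) h y = H k y"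
    by (rule iter_deriv_eq_derivative_family[OF assms])
  have "((deriv ^^ k) h has_real_derivative H (Suc k) y) (at y)"
    by (rule has_field_derivative_transform_within_open[OF H[OF y] \<open>open U\<close> y]) (simp add: eq)
  then show "((deriv ^^ k) h has_real_derivative (deriv ^^ Suc k) h y) (at y)"
    by (simp only: eq[OF y])
qed

lemma smooth_onD:
  "smooth_on U h \<Longrightarrow> y \<in> U \<Longrightarrow> ((deriv ^^ k) h has_real_derivative (deriv ^^ Suc k) h y) (at y)"
  unfolding smooth_on_def by blast

lemma smooth_on_const: "open U \<Longrightarrow> smooth_on U (\<lambda>t. c)"
  by (rule smooth_onI_derivative_family[where H = "\<lambda>k t. if k = 0 then c else 0"]) auto

lemma Suc_choose_if: "Suc n choose k = (n choose k) + (if k = 0 then 0 else n choose (k - 1))"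
  by (cases k) simp_all

lemma smooth_on_mult:
  assumes U: "open U" and u: "smooth_on U u" and v: "smooth_on U v"
  shows "smooth_on U (\<lambda>t. u t * v t)"
proof (rule smooth_onI_derivative_family[OF U,
      where H = "\<lambda>n t. \<Sum>i = 0..n. real (n choose i) * (deriv ^^ i) u t * (deriv ^^ (n - i)) v t"])
  fix y assume "y \<in> U"
  then show "u y * v y = (\<Sum>i = 0..0. real (0 choose i) * (deriv ^^ i) u y * (deriv ^^ (0 - i)) v y)"
    by simp
next
  fix n y assume y: "y \<in> U"
  have pascal: "(\<Sum>i = 0..n. real (n choose i) *
        ((deriv ^^ Suc i) u y * (deriv ^^ (n - i)) v y + (deriv ^^ Suc (n - i)) v y * (deriv ^^ i) u y)) =
      v y * (deriv ^^ Suc n) u y +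
        (\<Sum>i = 0..n. (deriv ^^ i) u y * (real (Suc n choose i) * (deriv ^^ (Suc n - i)) v y))"
    apply (simp add: Suc_choose_if algebra_simps sum.distrib del: funpow.simps)
    apply (subst (4) sum_Suc_reindex)
    apply (auto simp: algebra_simps Suc_diff_le intro: sum.cong simp del: funpow.simps)
    done
  have "((\<lambda>t. \<Sum>i = 0..n. real (n choose i) * (deriv ^^ i) u t * (deriv ^^ (n - i)) v t)
      has_real_derivative (\<Sum>i = 0..n. real (n choose i) *
        ((deriv ^^ Suc i) u y * (deriv ^^ (n - i)) v y + (deriv ^^ Suc (n - i)) v y * (deriv ^^ i) u y))) (at y)"
    by (rule DERIV_sum, rule DERIV_cong[OF DERIV_mult[OF DERIV_cmult[OF smooth_onD[OF u y]] smooth_onD[OF v y]]])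
       (simp add: algebra_simps del: funpow.simps)
  then show "((\<lambda>t. \<Sum>i = 0..n. real (n choose i) * (deriv ^^ i) u t * (deriv ^^ (n - i)) v t)
      has_real_derivative (\<Sum>i = 0..Suc n. real (Suc n choose i) * (deriv ^^ i) u y * (deriv ^^ (Suc n - i)) v y)) (at y)"
    by (rule DERIV_cong) (unfold pascal, simp add: algebra_simps del: funpow.simps)
qed

lemma smooth_on_power:
  assumes "open U" and "smooth_on U g"
  shows "smooth_on U (\<lambda>t. g t ^ p)"
proof (induction p)
  case 0
  then show ?case using smooth_on_const[OF \<open>open U\<close>] by simp
next
  case (Suc p)
  then show ?case using smooth_on_mult[OF \<open>open U\<close> \<open>smooth_on U g\<close> Suc] by simp
qed

lemma iter_deriv_Suc_const: "(deriv ^^ Suc k) (\<lambda>t. c) = (\<lambda>t. 0::real)"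
proof -
  have "(deriv ^^ k) (\<lambda>t. 0) = (\<lambda>t. 0::real)" by (induction k) simp_all
  then show ?thesis by (simp only: funpow_Suc_right o_apply deriv_const)
qed

lemma alternating_binomial_sum_index_shift:
  "(\<Sum>j = 0..m. (-1::real) ^ j * real (m choose j) * (real j * a ^ (j - 1) * b j)) =
     - real m * (\<Sum>i = 0..m - 1. (-1) ^ i * real ((m - 1) choose i) * a ^ i * b (Suc i))"
proof (cases m)
  case 0
  then show ?thesis by simp
next
  case (Suc m')
  have "(\<Sum>j = 0..Suc m'. (-1::real) ^ j * real (Suc m' choose j) * (real j * a ^ (j - 1) * b j)) =
        (\<Sum>i = 0..m'. - ((-1) ^ i * (real (Suc m' choose Suc i) * real (Suc i)) * a ^ i * b (Suc i)))"
    by (subst sum.atLeast0_atMost_Suc_shift) (simp add: mult_ac)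
  also have "\<dots> = (\<Sum>i = 0..m'. - real (Suc m') * ((-1) ^ i * real (m' choose i) * a ^ i * b (Suc i)))"
  proof (rule sum.cong[OF refl])
    fix i
    have e: "real (Suc m' choose Suc i) * real (Suc i) = real (Suc m') * real (m' choose i)"
      using Suc_times_binomial[of i m'] by (metis mult.commute of_nat_mult)
    show "- ((-1) ^ i * (real (Suc m' choose Suc i) * real (Suc i)) * a ^ i * b (Suc i)) =
        - real (Suc m') * ((-1) ^ i * real (m' choose i) * a ^ i * b (Suc i))"
      unfolding e by (simp add: algebra_simps)
  qed
  finally show ?thesis by (simp add: Suc sum_distrib_left)
qed

definition centred_power_deriv :: "(real \<Rightarrow> real) \<Rightarrow> nat \<Rightarrow> nat \<Rightarrow> real \<Rightarrow> real" where
  "centred_power_deriv g m k y =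
     (\<Sum>j = 0..m. (-1) ^ j * real (m choose j) * g y ^ j * (deriv ^^ k) (\<lambda>t. g t ^ (m - j)) y)"

lemma has_real_derivative_centred_power_deriv:
  assumes U: "open U" and g: "smooth_on U g" and y: "y \<in> U"
  shows "(centred_power_deriv g m k has_real_derivative
           centred_power_deriv g m (Suc k) y - real m * deriv g y * centred_power_deriv g (m - 1) k y) (at y)"
proof -
  have gd: "(g has_real_derivative deriv g y) (at y)" using smooth_onD[OF g y, of 0] by simp
  define T where "T j = (-1) ^ j * real (m choose j) *
      (real j * (deriv g y * g y ^ (j - 1)) * (deriv ^^ k) (\<lambda>t. g t ^ (m - j)) y
        + g y ^ j * (deriv ^^ Suc k) (\<lambda>t. g t ^ (m - j)) y)" for j
  have "(centred_power_deriv g m k has_real_derivative (\<Sum>j = 0..m. T j)) (at y)"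
    unfolding centred_power_deriv_def[abs_def] T_def
    by (rule DERIV_sum, rule DERIV_cong[OF DERIV_mult[OF DERIV_cmult[OF DERIV_power[OF gd]]
          smooth_onD[OF smooth_on_power[OF U g] y]]])
       (simp add: algebra_simps del: funpow.simps)
  moreover have "(\<Sum>j = 0..m. T j) =
      centred_power_deriv g m (Suc k) y - real m * deriv g y * centred_power_deriv g (m - 1) k y"
  proof -
    have "(\<Sum>j = 0..m. T j) = centred_power_deriv g m (Suc k) y +
        (\<Sum>j = 0..m. (-1::real) ^ j * real (m choose j) *
          (real j * g y ^ (j - 1) * (deriv g y * (deriv ^^ k) (\<lambda>t. g t ^ (m - j)) y)))"
      unfolding T_def centred_power_deriv_def
      by (simp add: sum.distrib[symmetric] algebra_simps del: funpow.simps)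
    also have "(\<Sum>j = 0..m. (-1::real) ^ j * real (m choose j) *
          (real j * g y ^ (j - 1) * (deriv g y * (deriv ^^ k) (\<lambda>t. g t ^ (m - j)) y))) =
        - real m * (\<Sum>i = 0..m - 1. (-1) ^ i * real ((m - 1) choose i) * g y ^ i *
          (deriv g y * (deriv ^^ k) (\<lambda>t. g t ^ (m - Suc i)) y))"
      by (rule alternating_binomial_sum_index_shift)
    also have "\<dots> = - real m * deriv g y * centred_power_deriv g (m - 1) k y"
      unfolding centred_power_deriv_def by (simp add: sum_distrib_left algebra_simps del: funpow.simps)
    finally show ?thesis by simp
  qed
  ultimately show ?thesis by simp
qed

lemma centred_power_deriv_eq_0:
  assumes "open U" and "smooth_on U g"
  shows "k < m \<Longrightarrow> y \<in> U \<Longrightarrow> centred_power_deriv g m k y = 0"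
proof (induction k arbitrary: m y)
  case 0
  have "centred_power_deriv g m 0 y = (\<Sum>j\<le>m. real (m choose j) * (- g y) ^ j * g y ^ (m - j))"
    unfolding centred_power_deriv_def
    by (simp add: atLeast0AtMost power_mult_distrib[symmetric] algebra_simps)
  also have "\<dots> = (- g y + g y) ^ m" by (simp only: binomial_ring)
  finally show ?case using 0 by simp
next
  case (Suc k m y)
  have "(centred_power_deriv g m k has_real_derivative
      centred_power_deriv g m (Suc k) y - real m * deriv g y * centred_power_deriv g (m - 1) k y) (at y)"
    by (rule has_real_derivative_centred_power_deriv[OF assms Suc.prems(2)])
  then have "((\<lambda>t. 0) has_real_derivative
      centred_power_deriv g m (Suc k) y - real m * deriv g y * centred_power_deriv g (m - 1) k y) (at y)"
    by (rule has_field_derivative_transform_within_open[OF _ \<open>open U\<close> Suc.prems(2)])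
       (use Suc.IH Suc.prems in auto)
  then have "centred_power_deriv g m (Suc k) y = real m * deriv g y * centred_power_deriv g (m - 1) k y"
    using DERIV_unique DERIV_const by fastforce
  then show ?case using Suc.IH Suc.prems by auto
qed

lemma centred_power_deriv_diag:
  assumes "open U" and "smooth_on U g" and "y \<in> U"
  shows "centred_power_deriv g (Suc k) (Suc k) y = real (Suc k) * deriv g y * centred_power_deriv g k k y"
proof -
  have "(centred_power_deriv g (Suc k) k has_real_derivative
      centred_power_deriv g (Suc k) (Suc k) y - real (Suc k) * deriv g y * centred_power_deriv g k k y) (at y)"
    using has_real_derivative_centred_power_deriv[OF assms, of "Suc k" k] by simp
  then have "((\<lambda>t. 0) has_real_derivative
      centred_power_deriv g (Suc k) (Suc k) y - real (Suc k) * deriv g y * centred_power_deriv g k k y) (at y)"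
    by (rule has_field_derivative_transform_within_open[OF _ \<open>open U\<close> \<open>y \<in> U\<close>])
       (use centred_power_deriv_eq_0[OF assms(1,2)] in auto)
  then show ?thesis using DERIV_unique DERIV_const by fastforce
qed

lemma centred_power_deriv_0_Suc: "centred_power_deriv g 0 (Suc k) y = 0"
  unfolding centred_power_deriv_def by (simp add: iter_deriv_Suc_const del: funpow.simps)

lemma faa_di_bruno:
  assumes U: "open U" and g: "smooth_on U g" and "g ` U \<subseteq> V" and f: "smooth_on V f"
    and "y \<in> U"
  shows "(deriv ^^ k) (\<lambda>t. f (g t)) y =
           (\<Sum>m = 0..k. (deriv ^^ m) f (g y) / fact m * centred_power_deriv g m k y)"
proof (rule iter_deriv_eq_derivative_family[OF U _ _ \<open>y \<in> U\<close>])
  fix y assume "y \<in> U"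
  show "f (g y) = (\<Sum>m = 0..0. (deriv ^^ m) f (g y) / fact m * centred_power_deriv g m 0 y)"
    by (simp add: centred_power_deriv_def)
next
  fix k y assume y: "y \<in> U"
  have gd: "(g has_real_derivative deriv g y) (at y)" using smooth_onD[OF g y, of 0] by simp
  have gy: "g y \<in> V" using assms(3) y by auto
  define A where "A m = (deriv ^^ Suc m) f (g y) * deriv g y / fact m * centred_power_deriv g m k y" for m
  define B where "B m = (deriv ^^ m) f (g y) / fact m * centred_power_deriv g m (Suc k) y" for m
  define C where "C m = (deriv ^^ m) f (g y) / fact m *
      (real m * deriv g y * centred_power_deriv g (m - 1) k y)" for m
  have "((\<lambda>t. \<Sum>m = 0..k. (deriv ^^ m) f (g t) / fact m * centred_power_deriv g m k t)
      has_real_derivative (\<Sum>m = 0..k. A m + (B m - C m))) (at y)"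
    by (rule DERIV_sum, rule DERIV_cong[OF DERIV_mult[OF DERIV_cdivide[OF DERIV_chain2[OF smooth_onD[OF f gy] gd]]
          has_real_derivative_centred_power_deriv[OF U g y]]])
       (simp add: A_def B_def C_def algebra_simps del: funpow.simps)
  moreover have "(\<Sum>m = 0..k. A m + (B m - C m)) = (\<Sum>m = 0..Suc k. B m)"
  proof -
    have fact_Suc: "(fact (Suc i) :: real) = real (Suc i) * fact i" for i
      by (simp del: of_nat_Suc)
    have C0: "C 0 = 0" by (simp add: C_def)
    have CS: "C (Suc i) = A i" for i
      unfolding A_def C_def fact_Suc diff_Suc_1 by (simp add: divide_simps del: funpow.simps of_nat_Suc)
    have BS: "B (Suc k) = A k"
      unfolding A_def B_def fact_Suc centred_power_deriv_diag[OF U g y]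
      by (simp add: divide_simps del: funpow.simps of_nat_Suc)
    have "(\<Sum>m = 0..k. C m) = (\<Sum>m<k. A m)"
    proof (cases k)
      case (Suc k')
      have "(\<Sum>m = 0..k. C m) = C 0 + (\<Sum>i\<le>k'. C (Suc i))"
        by (simp only: Suc atLeast0AtMost sum.atMost_Suc_shift)
      then show ?thesis by (simp add: C0 CS Suc lessThan_Suc_atMost)
    qed (simp add: C0)
    moreover have "(\<Sum>m = 0..k. A m) = (\<Sum>m<k. A m) + A k"
      by (simp add: atLeast0AtMost lessThan_Suc_atMost[symmetric])
    ultimately show ?thesis using BS by (simp add: sum.distrib sum_subtractf)
  qed
  ultimately show "((\<lambda>t. \<Sum>m = 0..k. (deriv ^^ m) f (g t) / fact m * centred_power_deriv g m k t)
      has_real_derivative (\<Sum>m = 0..Suc k. (deriv ^^ m) f (g y) / fact m * centred_power_deriv g m (Suc k) y)) (at y)"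
    by (simp add: B_def del: funpow.simps)
qed

lemma frac_coeff_of_nat_eq_0:
  assumes "k \<noteq> a"
  shows "frac_coeff (real a) k = 0"
proof -
  have "pi * (real a - real k) = pi * of_int (int a - int k)" by simp
  then have "sin (pi * (real a - real k)) = 0" by (simp only: sin_npi_int)
  then show ?thesis using assms by (simp add: frac_coeff_def sinc_ratio_def)
qed

lemma frac_coeff_eq:
  assumes "0 < \<alpha>" "\<alpha> < 1"
  shows "frac_coeff \<alpha> k = (-1) ^ k * sin (pi * \<alpha>) * Gamma (\<alpha> + 1) / (pi * (\<alpha> - real k) * fact k)"
proof -
  have "\<alpha> \<noteq> real k"
    using assms by (cases k) auto
  moreover have "sin (pi * (\<alpha> - real k)) = (-1) ^ k * sin (pi * \<alpha>)"
    by (simp add: right_diff_distrib sin_diff)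
  moreover have "Gamma (real k + 1) = fact k"
    using Gamma_fact[of k] by (simp add: add.commute)
  ultimately show ?thesis by (simp add: frac_coeff_def sinc_ratio_def)
qed

text \<open>
  For \<open>m = 0\<close> and \<open>n > 0\<close> the identity fails; the corresponding terms vanish by
  \<open>centred_power_deriv_0_Suc\<close> instead.
\<close>

lemma frac_coeff_mult_F22_coeff:
  assumes "0 \<le> \<alpha>" "\<alpha> \<le> 1" "m \<noteq> 0 \<or> n = 0"
  shows "frac_coeff \<alpha> m * F22_coeff \<alpha> m n = frac_coeff \<alpha> (m + n)"
proof (cases "n = 0")
  case True
  then show ?thesis by (simp add: F22_coeff_def)
next
  case n: False
  with assms have m: "m \<noteq> 0" by auto
  consider "\<alpha> = 0" | "\<alpha> = 1" | "0 < \<alpha> \<and> \<alpha> < 1" using assms by linarith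
  then show ?thesis
  proof cases
    case 1
    then show ?thesis using frac_coeff_of_nat_eq_0[of m 0] frac_coeff_of_nat_eq_0[of "m + n" 0] m by simp
  next
    case 2
    then have "F22_coeff \<alpha> m n = 0" if "m = 1"
      using that n by (simp add: F22_coeff_def pochhammer_0_left)
    moreover have "frac_coeff \<alpha> (m + n) = 0" "m \<noteq> 1 \<Longrightarrow> frac_coeff \<alpha> m = 0"
      using frac_coeff_of_nat_eq_0[of "m + n" 1] frac_coeff_of_nat_eq_0[of m 1] 2 m n by auto
    ultimately show ?thesis by fastforce
  next
    case 3
    define a where "a = real m - \<alpha>"
    define b where "b = a + real n"
    have a: "a \<noteq> 0" "b \<noteq> 0" and a_eqs: "1 + real m - \<alpha> = a + 1" "\<alpha> - real m = - a"
      "\<alpha> - real (m + n) = - b"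
      using 3 m unfolding a_def b_def by auto
    have "pochhammer (a + 1) n > 0"
      by (rule pochhammer_pos) (use 3 in \<open>simp add: a_def\<close>)
    moreover have "pochhammer (1 + real m) n > (0::real)"
      by (rule pochhammer_pos) simp
    ultimately have nz: "pochhammer (a + 1) n \<noteq> 0" "pochhammer (1 + real m) n \<noteq> (0::real)"
      by simp_all
    have "pochhammer a n * b = a * pochhammer (a + 1) n"
      using pochhammer_rec[of a n] pochhammer_rec'[of a n] by (simp add: b_def mult.commute)
    then have poch_a: "pochhammer a n = a * pochhammer (a + 1) n / b"
      using a by (simp add: eq_divide_eq)
    have fact_add: "(fact (m + n) :: real) = fact m * pochhammer (1 + real m) n"
      using pochhammer_product'[of "1::real" m n] by (simp add: pochhammer_fact[symmetric] add.commute)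
    show ?thesis
      unfolding frac_coeff_eq[OF 3[THEN conjunct1] 3[THEN conjunct2]] F22_coeff_def
      unfolding a_eqs(1) a_def[symmetric] poch_a fact_add a_eqs(2,3) pochhammer_fact[symmetric]
      using a nz pi_neq_zero by (simp add: field_simps power_add)
  qed
qed

lemma suminf_eq_infsum:
  fixes f :: "nat \<Rightarrow> 'a::banach"
  assumes "summable (\<lambda>n. norm (f n))"
  shows "suminf f = (\<Sum>\<^sub>\<infinity>n. f n)"
  using norm_summable_imp_has_sum[OF assms summable_sums[OF summable_norm_cancel[OF assms]]]
  by (simp add: infsumI)

lemma infsum_regroup_by_degree:
  fixes f :: "nat \<times> nat \<times> nat \<Rightarrow> 'a::banach"
  assumes "f summable_on {(m, j, n). j \<le> m}"
  shows "(\<Sum>\<^sub>\<infinity>(m, j, n)\<in>{(m, j, n). j \<le> m}. f (m, j, n)) =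
           (\<Sum>\<^sub>\<infinity>k. \<Sum>m = 0..k. \<Sum>j = 0..m. f (m, j, k - m))"
proof -
  define D where "D k = {(m, j). m \<le> k \<and> j \<le> m}" for k :: nat
  have bij: "bij_betw (\<lambda>(k, m, j). (m, j, k - m)) (Sigma UNIV D) {(m, j, n). j \<le> m}"
    by (rule bij_betwI[where g = "\<lambda>(m, j, n). (m + n, m, j)"]) (auto simp: D_def)
  have D: "D k = Sigma {0..k} (\<lambda>m. {0..m})" for k by (auto simp: D_def)
  have "(\<Sum>\<^sub>\<infinity>(m, j, n)\<in>{(m, j, n). j \<le> m}. f (m, j, n)) =
      (\<Sum>\<^sub>\<infinity>(k, m, j)\<in>Sigma UNIV D. f (m, j, k - m))"
    using infsum_reindex_bij_betw[OF bij, of f] by (simp add: case_prod_unfold)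
  also have "\<dots> = (\<Sum>\<^sub>\<infinity>k. \<Sum>\<^sub>\<infinity>(m, j)\<in>D k. f (m, j, k - m))"
    using summable_on_reindex_bij_betw[OF bij, of f] assms
    by (subst infsum_Sigma_banach[symmetric]) (simp_all add: case_prod_unfold)
  also have "\<dots> = (\<Sum>\<^sub>\<infinity>k. \<Sum>m = 0..k. \<Sum>j = 0..m. f (m, j, k - m))"
    by (simp add: D sum.Sigma)
  finally show ?thesis .
qed

lemma infsum_split_by_first:
  fixes f :: "nat \<times> nat \<times> nat \<Rightarrow> 'a::banach"
  assumes "f summable_on {(m, j, n). j \<le> m}"
  shows "(\<Sum>\<^sub>\<infinity>(m, j, n)\<in>{(m, j, n). j \<le> m}. f (m, j, n)) = (\<Sum>\<^sub>\<infinity>m. \<Sum>j = 0..m. \<Sum>\<^sub>\<infinity>n. f (m, j, n))"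
proof -
  have S: "{(m::nat, j::nat, n::nat). j \<le> m} = Sigma UNIV (\<lambda>m. Sigma {0..m} (\<lambda>_. UNIV))" by auto
  have "(\<lambda>jn. f (m, jn)) summable_on Sigma {0..m} (\<lambda>_. UNIV)" for m
  proof -
    have "f summable_on Pair m ` Sigma {0..m} (\<lambda>_. UNIV)"
      by (rule summable_on_subset_banach[OF assms]) auto
    then show ?thesis by (subst (asm) summable_on_reindex) (auto intro: inj_onI simp: o_def)
  qed
  then show ?thesis
    using assms unfolding S
    by (simp add: infsum_Sigma_banach[symmetric] case_prod_unfold)
qed

lemma sum_triple_term_eq:
  assumes "0 \<le> \<alpha>" "\<alpha> \<le> 1" "x > 0" "m \<le> k"
  shows "(\<Sum>j = 0..m. triple_term \<alpha> f g x m j (k - m)) =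
           frac_coeff \<alpha> k * x powr (real k - \<alpha>) *
             ((deriv ^^ m) f (g x) / fact m * centred_power_deriv g m k x)"
proof -
  define n where "n = k - m"
  have k: "k = n + m" using \<open>m \<le> k\<close> by (simp add: n_def)
  have "(deriv ^^ n) ((deriv ^^ m) u) = (deriv ^^ k) u" for u :: "real \<Rightarrow> real"
    by (simp add: k funpow_add)
  then have "(\<Sum>j = 0..m. triple_term \<alpha> f g x m j n) =
      (frac_coeff \<alpha> m * F22_coeff \<alpha> m n) * (x ^ n * x powr (real m - \<alpha>)) *
        ((deriv ^^ m) f (g x) / fact m * centred_power_deriv g m k x)"
    unfolding triple_term_def F22_term_def centred_power_deriv_def sum_distrib_left
    by (intro sum.cong refl) (simp add: field_simps)
  also have "\<dots> = frac_coeff \<alpha> k * x powr (real k - \<alpha>) *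
      ((deriv ^^ m) f (g x) / fact m * centred_power_deriv g m k x)"
  proof (cases "m = 0 \<and> n \<noteq> 0")
    case True
    then show ?thesis using k centred_power_deriv_0_Suc[of g "n - 1"] by simp
  next
    case False
    then have "frac_coeff \<alpha> m * F22_coeff \<alpha> m n = frac_coeff \<alpha> k"
      using frac_coeff_mult_F22_coeff[OF assms(1,2)] k by (simp add: add.commute)
    moreover have "x ^ n * x powr (real m - \<alpha>) = x powr (real k - \<alpha>)"
      using \<open>x > 0\<close> by (simp add: k powr_realpow[symmetric] powr_add[symmetric] add_diff_eq)
    ultimately show ?thesis by simp
  qed
  finally show ?thesis by (simp add: n_def)
qed

lemma frac_D_term_comp_eq_sum_triple_term:
  assumes "0 \<le> \<alpha>" "\<alpha> \<le> 1" "open U" "smooth_on U g" "g ` U \<subseteq> V" "smooth_on V f"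
    and "f (g 0) = 0" "x \<in> U" "x > 0"
  shows "frac_D_term \<alpha> (\<lambda>t. f (g t)) x k = (\<Sum>m = 0..k. \<Sum>j = 0..m. triple_term \<alpha> f g x m j (k - m))"
proof -
  have "frac_D_term \<alpha> (\<lambda>t. f (g t)) x k = frac_coeff \<alpha> k * x powr (real k - \<alpha>) *
      (\<Sum>m = 0..k. (deriv ^^ m) f (g x) / fact m * centred_power_deriv g m k x)"
    unfolding frac_D_term_def faa_di_bruno[OF assms(3-6,8), symmetric] using \<open>f (g 0) = 0\<close> by simp
  also have "\<dots> = (\<Sum>m = 0..k. \<Sum>j = 0..m. triple_term \<alpha> f g x m j (k - m))"
    unfolding sum_distrib_left by (intro sum.cong refl) (simp add: sum_triple_term_eq assms(1,2,9))
  finally show ?thesis .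
qed

lemma RHS_term_eq_sum_infsum_triple_term:
  assumes "\<And>j. j \<le> m \<Longrightarrow> summable (\<lambda>n. \<bar>F22_term \<alpha> m ((deriv ^^ m) (\<lambda>t. g t ^ (m - j))) x n\<bar>)"
  shows "RHS_term \<alpha> f g x m = (\<Sum>j = 0..m. \<Sum>\<^sub>\<infinity>n. triple_term \<alpha> f g x m j n)"
proof -
  have "(\<Sum>\<^sub>\<infinity>n. triple_term \<alpha> f g x m j n) =
      (-1) ^ j / fact m * real (m choose j) * g x ^ j *
        (F22_op \<alpha> m ((deriv ^^ m) (\<lambda>t. g t ^ (m - j))) x *
          (frac_coeff \<alpha> m * x powr (real m - \<alpha>) * (deriv ^^ m) f (g x)))" if "j \<le> m" for j
    unfolding triple_term_def F22_op_def mult.assoc[symmetric] infsum_cmult_left' infsum_cmult_right'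
    using suminf_eq_infsum[of "F22_term \<alpha> m ((deriv ^^ m) (\<lambda>t. g t ^ (m - j))) x"] assms[OF that]
    by (simp add: mult_ac)
  then show ?thesis
    unfolding RHS_term_def W_weight_def sum_distrib_right by (intro sum.cong refl) (simp add: mult_ac)
qed

theorem mainTheorem2:
  fixes \<alpha> x :: real and f g :: "real \<Rightarrow> real" and U V :: "real set"
  assumes "0 \<le> \<alpha>" "\<alpha> \<le> 1"
    and "open U" "{0..} \<subseteq> U" "smooth_on U g"
    and "open V" "g ` U \<subseteq> V" "smooth_on V f"
    and "f (g 0) = 0"
    and "x > 0"
    and "summable (\<lambda>k. \<bar>frac_D_term \<alpha> (\<lambda>t. f (g t)) x k\<bar>)"
    and "\<And>m j. j \<le> m \<Longrightarrow>
           summable (\<lambda>n. \<bar>F22_term \<alpha> m ((deriv ^^ m) (\<lambda>t. g t ^ (m - j))) x n\<bar>)"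
    and "summable (\<lambda>m. \<bar>RHS_term \<alpha> f g x m\<bar>)"
    and "(\<lambda>(m, j, n). \<bar>triple_term \<alpha> f g x m j n\<bar>) summable_on {(m, j, n). j \<le> m}"
  shows "frac_D \<alpha> (\<lambda>t. f (g t)) x = (\<Sum>m. RHS_term \<alpha> f g x m)"
proof -
  have "x \<in> U" using assms(4,10) by auto
  define T where "T = (\<lambda>(m, j, n). triple_term \<alpha> f g x m j n)"
  have "(\<lambda>p. norm (T p)) = (\<lambda>(m, j, n). \<bar>triple_term \<alpha> f g x m j n\<bar>)"
    by (auto simp: T_def fun_eq_iff)
  then have "(\<lambda>p. norm (T p)) summable_on {(m, j, n). j \<le> m}"
    using assms(14) by simp
  then have summable: "T summable_on {(m, j, n). j \<le> m}"
    by (rule abs_summable_summable)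
  have "frac_D \<alpha> (\<lambda>t. f (g t)) x = (\<Sum>\<^sub>\<infinity>k. frac_D_term \<alpha> (\<lambda>t. f (g t)) x k)"
    unfolding frac_D_def by (rule suminf_eq_infsum) (simp add: assms(11))
  also have "\<dots> = (\<Sum>\<^sub>\<infinity>k. \<Sum>m = 0..k. \<Sum>j = 0..m. T (m, j, k - m))"
    unfolding T_def
    by (simp only: frac_D_term_comp_eq_sum_triple_term[OF assms(1-3,5,7-9) \<open>x \<in> U\<close> assms(10)] prod.case)
  also have "\<dots> = (\<Sum>\<^sub>\<infinity>(m, j, n)\<in>{(m, j, n). j \<le> m}. T (m, j, n))"
    by (rule infsum_regroup_by_degree[OF summable, symmetric])
  also have "\<dots> = (\<Sum>\<^sub>\<infinity>m. \<Sum>j = 0..m. \<Sum>\<^sub>\<infinity>n. T (m, j, n))"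
    by (rule infsum_split_by_first[OF summable])
  also have "\<dots> = (\<Sum>\<^sub>\<infinity>m. RHS_term \<alpha> f g x m)"
    unfolding T_def prod.case using assms(12) by (simp only: RHS_term_eq_sum_infsum_triple_term)
  also have "\<dots> = (\<Sum>m. RHS_term \<alpha> f g x m)"
    by (rule suminf_eq_infsum[symmetric]) (simp add: assms(13))
  finally show ?thesis .
qed

end
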